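(* Let $a,b,c,d$ be four points on the unit circle, lying in this order along the circle, such that $L[a,b]$ and $L[c,d]$ are not parallel. Let $h$ be a point of the open segment $(b,c)$, and set $g=\mathrm{LIS}[a,b,c,d]$, $j=\mathrm{LIS}[g,h,a,c]$, $k=\mathrm{LIS}[g,h,b,d]$, $l=\mathrm{LIS}[g,h,a,d]$. Then $v_{\mathbb{B}^2}(h,j)=v_{\mathbb{B}^2}(k,l)$ and $v_{\mathbb{B}^2}(h,k)=v_{\mathbb{B}^2}(j,l)$.
   Context: $\mathbb{B}^2$ is the open unit disk in $\mathbb{C}$. For points $p,q,r,s$ with $p\ne q$, $r\ne s$, $\mathrm{LIS}[p,q,r,s]$ denotes the unique intersection point of the line $L[p,q]$ through $p,q$ and the line $L[r,s]$ through $r,s$. The visual angle metric is $v_{\mathbb{B}^2}(x,y)=\sup\{\measuredangle(x,z,y): z\in\partial\mathbb{B}^2\}$, where $\measuredangle(x,z,y)$ is the angle at $z$ between the segments $[z,x]$ and $[z,y]$. *)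

theory Defs
  imports "HOL-Analysis.Analysis"
begin

definition vangle_at :: "complex \<Rightarrow> complex \<Rightarrow> complex \<Rightarrow> real" where
  "vangle_at x z y = arccos ((Re ((x - z) * cnj (y - z))) / (cmod (x - z) * cmod (y - z)))"

definition line_through :: "complex \<Rightarrow> complex \<Rightarrow> complex set" where
  "line_through p q = {p + of_real t * (q - p) | t. t \<in> (UNIV :: real set)}"

definition lines_parallel :: "complex \<Rightarrow> complex \<Rightarrow> complex \<Rightarrow> complex \<Rightarrow> bool" where
  "lines_parallel p q r s \<longleftrightarrow> (\<exists>t::real. s - r = of_real t * (q - p))"

definition LIS :: "complex \<Rightarrow> complex \<Rightarrow> complex \<Rightarrow> complex \<Rightarrow> complex" where
  "LIS p q r s = (THE z. z \<in> line_through p q \<and> z \<in> line_through r s)"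

definition visual_angle_metric :: "complex \<Rightarrow> complex \<Rightarrow> real" where
  "visual_angle_metric x y = (SUP z \<in> sphere 0 1. vangle_at x z y)"

definition in_circle_order :: "complex \<Rightarrow> complex \<Rightarrow> complex \<Rightarrow> complex \<Rightarrow> bool" where
  "in_circle_order a b c d \<longleftrightarrow>
     (\<exists>s t u w. s < t \<and> t < u \<and> u < w \<and> w < s + 2 * pi \<and>
        ((a = cis s \<and> b = cis t \<and> c = cis u \<and> d = cis w) \<or>
         (d = cis s \<and> c = cis t \<and> b = cis u \<and> a = cis w)))"

end

theory Submission
  imports Defs
begin

text \<open>Since the chords [a, b] and [c, d] do not cross, their lines meet at a point g outside the
  closed disk. The harmonic homology with centre g and axis the polar of g preserves the unit circle,
  lines, and every line through g; so it swaps a with b and c with d, and maps the intersections of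
  the line through g and h with [b, c], [a, c], [b, d] to those with [a, d], [b, d], [a, c], i.e.
  h to l, j to k and k to j. On the line through g and h it agrees with an inversion in a circle
  orthogonal to the unit circle. That inversion maps the unit circle onto itself and preserves the
  angle at each boundary point subtended by two points of this line inside the disk, hence it
  preserves the visual angle metric: v(h, j) = v(l, k) and v(h, k) = v(l, j).\<close>

lemma norm_chord_point_sq:
  assumes "cmod p = 1" "cmod q = 1"
  shows "(cmod (p + of_real r * (q - p)))^2 = 1 + r * (r - 1) * (cmod (q - p))^2"
proof -
  have p: "(Re p)^2 + (Im p)^2 = 1" using assms(1) by (simp add: cmod_power2[symmetric])
  have q: "(Re q)^2 + (Im q)^2 = 1" using assms(2) by (simp add: cmod_power2[symmetric])
  show ?thesis unfolding cmod_power2 using p q by (simp add: power2_eq_square algebra_simps) algebra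
qed

lemma norm_chord_line_gt_1_iff:
  assumes "cmod p = 1" "cmod q = 1" "p \<noteq> q"
  shows "cmod (p + of_real r * (q - p)) > 1 \<longleftrightarrow> r * (r - 1) > 0"
proof -
  have "cmod (p + of_real r * (q - p)) > 1 \<longleftrightarrow> (cmod (p + of_real r * (q - p)))^2 > 1"
    using abs_square_le_1[of "cmod (p + of_real r * (q - p))"] by auto
  also have "\<dots> \<longleftrightarrow> r * (r - 1) * (cmod (q - p))^2 > 0"
    unfolding norm_chord_point_sq[OF assms(1,2)] by simp
  finally show ?thesis using assms(3) by (simp add: zero_less_mult_iff)
qed

lemma norm_chord_line_lt_1_iff:
  assumes "cmod p = 1" "cmod q = 1" "p \<noteq> q"
  shows "cmod (p + of_real r * (q - p)) < 1 \<longleftrightarrow> 0 < r \<and> r < 1"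
proof -
  have "cmod (p + of_real r * (q - p)) < 1 \<longleftrightarrow> (cmod (p + of_real r * (q - p)))^2 < 1"
    using abs_square_less_1[of "cmod (p + of_real r * (q - p))"] by simp
  also have "\<dots> \<longleftrightarrow> r * (r - 1) * (cmod (q - p))^2 < 0"
    unfolding norm_chord_point_sq[OF assms(1,2)] by simp
  also have "\<dots> \<longleftrightarrow> r * (r - 1) < 0" using assms(3) by (simp add: mult_less_0_iff)
  finally show ?thesis by (auto simp: mult_less_0_iff)
qed

lemma real_multiple_if_Im_cnj_mult_eq_0:
  assumes "Im (cnj v * w) = 0" "v \<noteq> 0"
  shows "w = of_real (Re (cnj v * w) / (cmod v)^2) * v"
proof -
  have e: "cnj v * w = of_real (Re (cnj v * w))" using assms(1) by (simp add: complex_eq_iff)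
  have n: "complex_of_real ((cmod v)^2) = v * cnj v" by (rule complex_norm_square)
  have "v * cnj v \<noteq> 0" using assms(2) by simp
  then have "w = (cnj v * w) * v / (v * cnj v)" by (simp add: field_simps)
  also have "\<dots> = of_real (Re (cnj v * w)) * v / of_real ((cmod v)^2)" using e n by simp
  finally show ?thesis by (simp add: field_simps)
qed

lemma mem_line_through_iff: "z \<in> line_through p q \<longleftrightarrow> (\<exists>t. z = p + of_real t * (q - p))"
  unfolding line_through_def by auto

lemma LIS_eqI:
  assumes "z0 \<in> line_through p q" "z0 \<in> line_through r s"
    "\<And>z. z \<in> line_through p q \<Longrightarrow> z \<in> line_through r s \<Longrightarrow> z = z0"
  shows "LIS p q r s = z0"
  unfolding LIS_def by (rule the_equality) (use assms in blast)+

lemma LIS_mem_lines: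
  assumes "p \<noteq> q" "r \<noteq> s" "\<not> lines_parallel p q r s"
  shows "LIS p q r s \<in> line_through p q" "LIS p q r s \<in> line_through r s"
proof -
  define u where "u = q - p"
  define w where "w = s - r"
  have u0: "u \<noteq> 0" and w0: "w \<noteq> 0" using assms u_def w_def by auto
  have not_real_multiple: "\<not> (\<exists>t. w = of_real t * u)"
    using assms(3) unfolding lines_parallel_def u_def w_def by blast
  have I: "Im (cnj w * u) \<noteq> 0"
  proof
    assume "Im (cnj w * u) = 0"
    then have "Im (cnj u * w) = 0" by (simp add: algebra_simps)
    then show False using real_multiple_if_Im_cnj_mult_eq_0 u0 not_real_multiple by blast
  qed
  define z0 where "z0 = p + of_real (Im (cnj w * (r - p)) / Im (cnj w * u)) * u"
  have z1: "z0 \<in> line_through p q" unfolding mem_line_through_iff z0_def u_def by blast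
  have "Im (cnj w * (z0 - r)) = 0" unfolding z0_def using I by (simp add: field_simps)
  then have "z0 - r = of_real (Re (cnj w * (z0 - r)) / (cmod w)^2) * w"
    using real_multiple_if_Im_cnj_mult_eq_0 w0 by blast
  then have z2: "z0 \<in> line_through r s" unfolding mem_line_through_iff w_def
    by (metis add.commute diff_add_cancel)
  have "z = z0" if zpq: "z \<in> line_through p q" and zrs: "z \<in> line_through r s" for z
  proof -
    obtain ta where "z = p + of_real ta * u" using zpq unfolding mem_line_through_iff u_def by blast
    moreover obtain ta' where "z0 = p + of_real ta' * u"
      using z1 unfolding mem_line_through_iff u_def by blast
    ultimately have e1: "z - z0 = of_real (ta - ta') * u" by (simp add: algebra_simps)
    obtain tb where "z = r + of_real tb * w" using zrs unfolding mem_line_through_iff w_def by blast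
    moreover obtain tb' where "z0 = r + of_real tb' * w"
      using z2 unfolding mem_line_through_iff w_def by blast
    ultimately have e2: "z - z0 = of_real (tb - tb') * w" by (simp add: algebra_simps)
    show ?thesis
    proof (rule ccontr)
      assume "z \<noteq> z0"
      then have "tb \<noteq> tb'" using e2 by auto
      then have "w = of_real ((ta - ta') / (tb - tb')) * u" using e1 e2
        by (simp add: field_simps)
      then show False using not_real_multiple by blast
    qed
  qed
  then have "LIS p q r s = z0" using LIS_eqI[OF z1 z2] by blast
  then show "LIS p q r s \<in> line_through p q" "LIS p q r s \<in> line_through r s" using z1 z2 by auto
qed

definition line_side :: "complex \<Rightarrow> complex \<Rightarrow> complex \<Rightarrow> real" where
  "line_side g h x = Im (cnj (h - g) * (x - g))"

lemma line_side_affine: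
  "line_side g h (p + of_real t * (q - p)) = (1 - t) * line_side g h p + t * line_side g h q"
  unfolding line_side_def by (simp add: algebra_simps)

lemma line_side_eq_0_iff:
  assumes "g \<noteq> h"
  shows "line_side g h x = 0 \<longleftrightarrow> x \<in> line_through g h"
proof
  assume "line_side g h x = 0"
  then have "x - g = of_real (Re (cnj (h - g) * (x - g)) / (cmod (h - g))^2) * (h - g)"
    using real_multiple_if_Im_cnj_mult_eq_0[of "h - g" "x - g"] assms unfolding line_side_def by fastforce
  then show "x \<in> line_through g h" unfolding mem_line_through_iff
    by (metis add.commute diff_add_cancel)
next
  assume "x \<in> line_through g h"
  then obtain t where "x = g + of_real t * (h - g)" unfolding mem_line_through_iff by blast
  then have "line_side g h x = Im (of_real t * ((h - g) * cnj (h - g)))"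
    unfolding line_side_def by (simp add: mult_ac)
  also have "\<dots> = t * Im ((h - g) * cnj (h - g))" by simp
  finally show "line_side g h x = 0" by (simp only: complex_In_mult_cnj_zero mult_zero_right)
qed

lemma LIS_crossing:
  assumes "g \<noteq> h" and sides: "line_side g h p * line_side g h q < 0"
  obtains \<rho> where "0 < \<rho>" "\<rho> < 1" "LIS g h p q = p + of_real \<rho> * (q - p)"
    and "LIS g h p q \<in> line_through g h"
    and "\<And>z. z \<in> line_through g h \<Longrightarrow> z \<in> line_through p q \<Longrightarrow> z = LIS g h p q"
proof -
  define sp where "sp = line_side g h p"
  define sq where "sq = line_side g h q"
  have d: "sp - sq \<noteq> 0" using sides sp_def sq_def by auto
  define \<rho> where "\<rho> = sp / (sp - sq)"
  have \<rho>: "0 < \<rho>" "\<rho> < 1"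
  proof -
    have "(sp > 0 \<and> sq < 0) \<or> (sp < 0 \<and> sq > 0)"
      using sides sp_def sq_def by (auto simp: mult_less_0_iff)
    then show "0 < \<rho>" "\<rho> < 1" unfolding \<rho>_def by (auto simp: divide_simps)
  qed
  have side_on_pq: "line_side g h (p + of_real t * (q - p)) = 0 \<longleftrightarrow> t = \<rho>" for t
    unfolding line_side_affine \<rho>_def sp_def[symmetric] sq_def[symmetric] using d
    by (auto simp: field_simps)
  define z0 where "z0 = p + of_real \<rho> * (q - p)"
  have z1: "z0 \<in> line_through g h" using side_on_pq line_side_eq_0_iff[OF assms(1)] z0_def by blast
  have z2: "z0 \<in> line_through p q" unfolding mem_line_through_iff z0_def by blast
  have uniq: "z = z0" if zgh: "z \<in> line_through g h" and zpq: "z \<in> line_through p q" for z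
  proof -
    obtain t where t: "z = p + of_real t * (q - p)" using zpq unfolding mem_line_through_iff by blast
    have "line_side g h z = 0" using zgh line_side_eq_0_iff[OF assms(1)] by blast
    then show ?thesis using side_on_pq[of t] t z0_def by simp
  qed
  have L: "LIS g h p q = z0" using LIS_eqI[OF z1 z2 uniq] by blast
  show ?thesis by (rule that[OF \<rho>]) (use L z0_def z1 uniq in simp_all)
qed

lemma cos_lt_cos_off_arc:
  assumes "0 < \<alpha>" "\<alpha> < pi" "\<alpha> < x" "x < 2 * pi - \<alpha>"
  shows "cos x < cos \<alpha>"
proof (cases "x \<le> pi")
  case True
  then show ?thesis using cos_monotone_0_pi[of \<alpha> x] assms by simp
next
  case False
  have "cos (2 * pi - x) < cos \<alpha>" using cos_monotone_0_pi[of \<alpha> "2 * pi - x"] assms False by simp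
  then show ?thesis by (simp add: cos_diff)
qed

lemma Re_cis_mult_cnj_cis: "Re (cis \<theta> * cnj (cis m)) = cos (\<theta> - m)"
  by (simp add: cis_cnj cis_mult)

lemma Re_cis_mult_cnj_mid_arc:
  "Re (cis s * cnj (cis ((s + t) / 2))) = cos ((t - s) / 2)"
  "Re (cis t * cnj (cis ((s + t) / 2))) = cos ((t - s) / 2)"
proof -
  have "s - (s + t) / 2 = - ((t - s) / 2)" by (simp add: field_simps)
  then show "Re (cis s * cnj (cis ((s + t) / 2))) = cos ((t - s) / 2)"
    unfolding Re_cis_mult_cnj_cis by (simp only: cos_minus)
  have "t - (s + t) / 2 = (t - s) / 2" by (simp add: field_simps)
  then show "Re (cis t * cnj (cis ((s + t) / 2))) = cos ((t - s) / 2)"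
    unfolding Re_cis_mult_cnj_cis by (simp only:)
qed

lemma Re_cis_mult_cnj_mid_arc_lt:
  assumes "s < t" "t < s + 2 * pi" "t < \<theta>" "\<theta> < s + 2 * pi"
  shows "Re (cis \<theta> * cnj (cis ((s + t) / 2))) < cos ((t - s) / 2)"
  unfolding Re_cis_mult_cnj_cis by (rule cos_lt_cos_off_arc) (use assms in \<open>auto simp: field_simps\<close>)

lemma cis_neq_within_turn:
  assumes "s < t" "t < s + 2 * pi"
  shows "cis s \<noteq> cis t"
proof
  assume "cis s = cis t"
  then have "cis (t - s) = 1" by (simp add: cis_divide[symmetric])
  then have "cos (t - s) = 1" by (metis cis.sel(1) one_complex.sel(1))
  then obtain n :: int where n: "t - s = real_of_int n * (2 * pi)"
    using cos_one_2pi_int by (auto simp: mult.assoc)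
  have "0 < real_of_int n * (2 * pi)" "real_of_int n * (2 * pi) < 1 * (2 * pi)"
    using assms unfolding n[symmetric] by auto
  then have "0 < n" "n < 1" by (simp_all add: zero_less_mult_iff mult_less_cancel_right)
  then show False by simp
qed

text \<open>The witness m is the midpoint of the arc from a to b that avoids c and d, and C is the cosine
  of half the length of that arc.\<close>

lemma in_circle_order_chord_line:
  assumes "in_circle_order a b c d"
  obtains m C where "cmod a = 1" "cmod b = 1" "cmod c = 1" "cmod d = 1" "a \<noteq> b" "c \<noteq> d"
    "Re (a * cnj m) = C" "Re (b * cnj m) = C" "Re (c * cnj m) < C" "Re (d * cnj m) < C"
proof -
  obtain s t u w where o: "s < t" "t < u" "u < w" "w < s + 2 * pi"
    and cs: "(a = cis s \<and> b = cis t \<and> c = cis u \<and> d = cis w) \<or>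
        (d = cis s \<and> c = cis t \<and> b = cis u \<and> a = cis w)"
    using assms unfolding in_circle_order_def by blast
  from cs show ?thesis
  proof
    assume H: "a = cis s \<and> b = cis t \<and> c = cis u \<and> d = cis w"
    show ?thesis
    proof (rule that[of "cis ((s + t) / 2)" "cos ((t - s) / 2)"])
      show "a \<noteq> b" "c \<noteq> d" using H cis_neq_within_turn[of s t] cis_neq_within_turn[of u w] o by auto
      show "Re (c * cnj (cis ((s + t) / 2))) < cos ((t - s) / 2)"
        "Re (d * cnj (cis ((s + t) / 2))) < cos ((t - s) / 2)"
        using H Re_cis_mult_cnj_mid_arc_lt[of s t] o by simp_all
    qed (use H Re_cis_mult_cnj_mid_arc in simp_all)
  next
    assume H: "d = cis s \<and> c = cis t \<and> b = cis u \<and> a = cis w"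
    have shift: "cis (x + 2 * pi) = cis x" for x by (simp add: cis_mult[symmetric])
    have cd_shifted: "c = cis (t + 2 * pi)" "d = cis (s + 2 * pi)" using H shift by auto
    show ?thesis
    proof (rule that[of "cis ((u + w) / 2)" "cos ((w - u) / 2)"])
      show "a \<noteq> b" "c \<noteq> d" using H cis_neq_within_turn[of u w] cis_neq_within_turn[of s t] o by auto
      show "Re (c * cnj (cis ((u + w) / 2))) < cos ((w - u) / 2)"
        "Re (d * cnj (cis ((u + w) / 2))) < cos ((w - u) / 2)"
        unfolding cd_shifted by (rule Re_cis_mult_cnj_mid_arc_lt; use o in simp)+
    qed (use H Re_cis_mult_cnj_mid_arc in simp_all)
  qed
qed

lemma chord_lines_meet_outside_disk:
  assumes "cmod c = 1" "cmod d = 1" "c \<noteq> d" "Re (c * cnj m) < C" "Re (d * cnj m) < C"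
    and "Re (a * cnj m) = C" "Re (b * cnj m) = C"
    and "g \<in> line_through a b" "g \<in> line_through c d"
  shows "cmod g > 1"
proof (rule ccontr)
  have affine: "Re ((p + of_real t * (q - p)) * cnj m) = (1 - t) * Re (p * cnj m) + t * Re (q * cnj m)"
    for p q :: complex and t :: real by (simp add: algebra_simps)
  obtain t where gt: "g = a + of_real t * (b - a)" using assms(8) mem_line_through_iff by blast
  have gC: "Re (g * cnj m) = C" unfolding gt affine assms(6,7) by (simp add: algebra_simps)
  obtain r where r: "g = c + of_real r * (d - c)" using assms(9) mem_line_through_iff by blast
  assume "\<not> cmod g > 1"
  then have r01: "0 \<le> r" "r \<le> 1"
    using norm_chord_line_gt_1_iff[OF assms(1-3), of r] r by (auto simp: mult_le_0_iff not_less)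
  have "Re (g * cnj m) = (1 - r) * Re (c * cnj m) + r * Re (d * cnj m)"
    unfolding r affine ..
  also have "\<dots> < (1 - r) * C + r * C"
  proof (cases "r = 0")
    case False
    then have "r * Re (d * cnj m) < r * C" using r01 assms(5) by simp
    moreover have "(1 - r) * Re (c * cnj m) \<le> (1 - r) * C" using assms(4) r01 by (simp add: mult_left_mono)
    ultimately show ?thesis by simp
  qed (use assms(4) in simp)
  also have "\<dots> = C" by (simp add: algebra_simps)
  finally show False using gC by simp
qed

definition circle_power :: "complex \<Rightarrow> real" where
  "circle_power g = (cmod g)^2 - 1"

text \<open>For \<open>cmod g > 1\<close> and \<open>v \<noteq> 0\<close>, \<open>circle_inversion g v\<close> is the inversion in the circle through g
  that is orthogonal to the unit circle and centred at \<open>g - (circle_power g / (2 * (g \<bullet> v))) * v\<close>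
  (the reflection in the diameter orthogonal to v if \<open>g \<bullet> v = 0\<close>).\<close>

definition inversion_denom :: "complex \<Rightarrow> complex \<Rightarrow> complex \<Rightarrow> complex" where
  "inversion_denom g v x = of_real (circle_power g) * cnj v + of_real (2 * (g \<bullet> v)) * cnj (x - g)"

definition circle_inversion :: "complex \<Rightarrow> complex \<Rightarrow> complex \<Rightarrow> complex" where
  "circle_inversion g v x = g - of_real (circle_power g) * v * cnj (x - g) / inversion_denom g v x"

lemma norm_add_real_mult_sq:
  "(cmod (g + of_real s * v))^2 = (cmod g)^2 + 2 * s * (g \<bullet> v) + s^2 * (cmod v)^2"
  unfolding cmod_power2 inner_complex_def by (simp add: power2_eq_square algebra_simps)

lemma of_real_circle_power: "complex_of_real (circle_power g) = g * cnj g - 1"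
  using complex_norm_square[of g] by (simp add: circle_power_def)

lemma of_real_two_inner: "complex_of_real (2 * (g \<bullet> v)) = g * cnj v + cnj g * v"
  by (simp add: complex_eq_iff inner_complex_def)

lemma inversion_denom_on_line:
  assumes "x - g = of_real s * v"
  shows "inversion_denom g v x = cnj v * of_real (circle_power g + 2 * (g \<bullet> v) * s)"
proof -
  have "cnj (x - g) = of_real s * cnj v" using arg_cong[OF assms, of cnj] by simp
  then show ?thesis unfolding inversion_denom_def by (simp add: algebra_simps)
qed

lemma inversion_denom_neq_0_on_circle:
  assumes "cmod z = 1" "circle_power g > 0" "v \<noteq> 0"
  shows "inversion_denom g v z \<noteq> 0"
proof
  assume D: "inversion_denom g v z = 0"
  have K: "g \<bullet> v \<noteq> 0"
  proof
    assume "g \<bullet> v = 0"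
    then show False using D assms(2,3) by (simp add: inversion_denom_def)
  qed
  define s where "s = - circle_power g / (2 * (g \<bullet> v))"
  have "cnj (z - g) = of_real s * cnj v"
    using D K unfolding inversion_denom_def s_def by (simp add: field_simps)
  then have "cnj (cnj (z - g)) = cnj (of_real s * cnj v)" by (rule arg_cong)
  then have "z = g + of_real s * v" by (simp add: algebra_simps)
  then have "(cmod z)^2 = (cmod g)^2 + 2 * s * (g \<bullet> v) + s^2 * (cmod v)^2"
    using norm_add_real_mult_sq by simp
  also have "2 * s * (g \<bullet> v) = - circle_power g" using K by (simp add: s_def)
  finally have "(cmod z)^2 = 1 + s^2 * (cmod v)^2" by (simp add: circle_power_def)
  moreover have "s \<noteq> 0" using assms(2) K by (simp add: s_def)
  ultimately have "(cmod z)^2 > 1" using assms(3) by simp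
  then show False using assms(1) by simp
qed

lemma circle_inversion_diff:
  assumes "inversion_denom g v x \<noteq> 0" "inversion_denom g v z \<noteq> 0"
  shows "circle_inversion g v x - circle_inversion g v z =
    - of_real (circle_power g * circle_power g) * v * cnj v * cnj (x - z)
      / (inversion_denom g v x * inversion_denom g v z)"
proof -
  define P where "P = complex_of_real (circle_power g)"
  define K where "K = complex_of_real (2 * (g \<bullet> v))"
  have "circle_inversion g v x - circle_inversion g v z =
    - P * P * v * cnj v * cnj (x - z) / ((P * cnj v + K * cnj (x - g)) * (P * cnj v + K * cnj (z - g)))"
    using assms unfolding circle_inversion_def inversion_denom_def P_def[symmetric] K_def[symmetric]
    by (simp add: field_simps)
  then show ?thesis unfolding P_def K_def inversion_denom_def by simp
qed

lemma norm_circle_inversion: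
  assumes "cmod z = 1" "circle_power g > 0" "v \<noteq> 0"
  shows "cmod (circle_inversion g v z) = 1"
proof -
  define D where "D = inversion_denom g v z"
  define N where "N = g * D - of_real (circle_power g) * v * cnj (z - g)"
  have D0: "D \<noteq> 0" unfolding D_def by (rule inversion_denom_neq_0_on_circle[OF assms])
  have F: "circle_inversion g v z = N / D"
    unfolding circle_inversion_def N_def D_def[symmetric] using D0 by (simp add: field_simps)
  have zz: "z * cnj z = 1" using assms(1) complex_norm_square[of z] by simp
  have ring_identity:
    "(g * (P * V + K * c) - P * v * c) * (G * (P * v + K * C) - P * V * C)
       - (P * V + K * c) * (P * v + K * C) = P * P * v * V * ((c + G) * (C + g) - 1)"
    if "P = g * G - 1" "K = g * V + G * v" for g G v V c C P K :: complex
    unfolding that by algebra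
  have cN: "cnj N = cnj g * cnj D - of_real (circle_power g) * cnj v * (z - g)" by (simp add: N_def)
  have cD: "cnj D = of_real (circle_power g) * v + of_real (2 * (g \<bullet> v)) * (z - g)"
    by (simp add: D_def inversion_denom_def)
  have "N * cnj N - D * cnj D = of_real (circle_power g) * of_real (circle_power g) * v * cnj v
      * ((cnj (z - g) + cnj g) * ((z - g) + g) - 1)"
    unfolding cN cD unfolding N_def D_def inversion_denom_def
    by (rule ring_identity[OF of_real_circle_power of_real_two_inner])
  then have "N * cnj N = D * cnj D" using zz by (simp add: mult.commute)
  then have "complex_of_real ((cmod N)^2) = complex_of_real ((cmod D)^2)"
    by (simp only: complex_norm_square)
  then have "(cmod N)^2 = (cmod D)^2" by (simp only: of_real_eq_iff)
  then have "cmod N = cmod D" using power2_eq_iff_nonneg[of "cmod N" "cmod D"] by simp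
  then show ?thesis using F D0 by (simp add: norm_divide)
qed

lemma circle_inversion_involutive:
  assumes "inversion_denom g v z \<noteq> 0" "circle_power g > 0" "v \<noteq> 0"
  shows "inversion_denom g v (circle_inversion g v z) \<noteq> 0"
    "circle_inversion g v (circle_inversion g v z) = z"
proof -
  define P where "P = complex_of_real (circle_power g)"
  define K where "K = complex_of_real (2 * (g \<bullet> v))"
  define E where "E = P * v + K * (z - g)"
  have P0: "P \<noteq> 0" using assms(2) P_def by simp
  have "cnj (inversion_denom g v z) = E" unfolding E_def P_def K_def inversion_denom_def by simp
  then have E0: "E \<noteq> 0" using assms(1) by auto
  have c: "cnj (circle_inversion g v z - g) = - P * cnj v * (z - g) / E"
    unfolding circle_inversion_def inversion_denom_def E_def P_def K_def by simp
  have "inversion_denom g v (circle_inversion g v z) = P * cnj v + K * (- P * cnj v * (z - g) / E)"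
    unfolding inversion_denom_def c P_def K_def ..
  also have "\<dots> = P * cnj v * (E - K * (z - g)) / E" using E0 by (simp add: field_simps)
  also have "\<dots> = P * P * v * cnj v / E" unfolding E_def by simp
  finally have D: "inversion_denom g v (circle_inversion g v z) = P * P * v * cnj v / E" .
  show "inversion_denom g v (circle_inversion g v z) \<noteq> 0" unfolding D using E0 P0 assms(3) by simp
  have "circle_inversion g v (circle_inversion g v z)
      = g - P * v * (- P * cnj v * (z - g) / E) / (P * P * v * cnj v / E)"
    unfolding circle_inversion_def[of g v "circle_inversion g v z"] D c P_def ..
  also have "\<dots> = z" using E0 P0 assms(3) by (simp add: field_simps)
  finally show "circle_inversion g v (circle_inversion g v z) = z" .
qed

lemma circle_inversion_image_circle:
  assumes "circle_power g > 0" "v \<noteq> 0"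
  shows "circle_inversion g v ` sphere 0 1 = sphere 0 1"
proof
  show "circle_inversion g v ` sphere 0 1 \<subseteq> sphere 0 1"
    using norm_circle_inversion[OF _ assms] by auto
  show "sphere 0 1 \<subseteq> circle_inversion g v ` sphere 0 1"
  proof
    fix z :: complex assume "z \<in> sphere 0 1"
    then have z: "cmod z = 1" by simp
    have "circle_inversion g v (circle_inversion g v z) = z"
      using circle_inversion_involutive(2)[OF inversion_denom_neq_0_on_circle[OF z assms] assms] .
    moreover have "circle_inversion g v z \<in> sphere 0 1" using norm_circle_inversion[OF z assms] by simp
    ultimately show "z \<in> circle_inversion g v ` sphere 0 1" by (metis image_eqI)
  qed
qed

lemma angle_cos_conj_scale:
  assumes "X' = \<alpha> * cnj X" "Y' = \<beta> * cnj Y" "\<alpha> * cnj \<beta> = of_real \<rho>" "\<rho> > 0"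
  shows "Re (X' * cnj Y') / (cmod X' * cmod Y') = Re (X * cnj Y) / (cmod X * cmod Y)"
proof -
  have "X' * cnj Y' = (\<alpha> * cnj \<beta>) * cnj (X * cnj Y)" using assms(1,2) by (simp add: mult_ac)
  then have r: "Re (X' * cnj Y') = \<rho> * Re (X * cnj Y)" using assms(3) by simp
  have "cmod \<alpha> * cmod \<beta> = \<rho>" using arg_cong[OF assms(3), of cmod] assms(4) by (simp add: norm_mult)
  moreover have "cmod X' * cmod Y' = (cmod \<alpha> * cmod \<beta>) * (cmod X * cmod Y)"
    using assms(1,2) by (simp add: norm_mult mult_ac)
  ultimately have m: "cmod X' * cmod Y' = \<rho> * (cmod X * cmod Y)" by simp
  show ?thesis unfolding r m using assms(4) by simp
qed

text \<open>Anti-conformality alone only preserves infinitesimal angles. The finite angle at z is preserved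
  because, for x and y on the line \<open>g + \<real> v\<close> and on the same side of the centre of the inversion,
  the factors \<open>inversion_denom g v x\<close> and \<open>inversion_denom g v y\<close> in \<open>circle_inversion_diff\<close>
  have the same argument.\<close>

lemma vangle_at_circle_inversion:
  assumes P: "circle_power g > 0" "v \<noteq> 0"
    and x: "x - g = of_real sx * v" and y: "y - g = of_real sy * v"
    and e: "(circle_power g + 2 * (g \<bullet> v) * sx) * (circle_power g + 2 * (g \<bullet> v) * sy) > 0"
    and z: "cmod z = 1"
  shows "vangle_at (circle_inversion g v x) (circle_inversion g v z) (circle_inversion g v y)
    = vangle_at x z y"
proof -
  define ex where "ex = circle_power g + 2 * (g \<bullet> v) * sx"
  define ey where "ey = circle_power g + 2 * (g \<bullet> v) * sy"
  have ex0: "ex \<noteq> 0" "ey \<noteq> 0" using e ex_def ey_def by auto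
  have Dx: "inversion_denom g v x = cnj v * of_real ex" using inversion_denom_on_line[OF x] ex_def by simp
  have Dy: "inversion_denom g v y = cnj v * of_real ey" using inversion_denom_on_line[OF y] ey_def by simp
  define Dz where "Dz = inversion_denom g v z"
  have Dz0: "Dz \<noteq> 0" using inversion_denom_neq_0_on_circle[OF z P] Dz_def by simp
  have Dx0: "inversion_denom g v x \<noteq> 0" and Dy0: "inversion_denom g v y \<noteq> 0"
    using Dx Dy ex0 P by auto
  define \<alpha> where "\<alpha> = - of_real (circle_power g * circle_power g) * v * cnj v
    / (inversion_denom g v x * Dz)"
  define \<beta> where "\<beta> = - of_real (circle_power g * circle_power g) * v * cnj v
    / (inversion_denom g v y * Dz)"
  have X: "circle_inversion g v x - circle_inversion g v z = \<alpha> * cnj (x - z)"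
    unfolding \<alpha>_def Dz_def circle_inversion_diff[OF Dx0 Dz0[unfolded Dz_def]] by simp
  have Y: "circle_inversion g v y - circle_inversion g v z = \<beta> * cnj (y - z)"
    unfolding \<beta>_def Dz_def circle_inversion_diff[OF Dy0 Dz0[unfolded Dz_def]] by simp
  define \<rho> where "\<rho> = (circle_power g)^4 * (cmod v)^2 / (ex * ey * (cmod Dz)^2)"
  have nv: "v * cnj v = of_real ((cmod v)^2)" by (rule complex_norm_square[symmetric])
  have nD: "Dz * cnj Dz = of_real ((cmod Dz)^2)" by (rule complex_norm_square[symmetric])
  have "\<alpha> * cnj \<beta> = of_real ((circle_power g)^4) * (v * cnj v) * (v * cnj v)
      / ((v * cnj v) * of_real (ex * ey) * (Dz * cnj Dz))"
    unfolding \<alpha>_def \<beta>_def Dx Dy by (simp add: field_simps power4_eq_xxxx)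
  also have "\<dots> = of_real \<rho>"
    unfolding nv nD \<rho>_def using P Dz0 ex0 by (simp add: field_simps power2_eq_square)
  finally have ab: "\<alpha> * cnj \<beta> = of_real \<rho>" .
  have \<rho>0: "\<rho> > 0" unfolding \<rho>_def using P Dz0 e ex_def ey_def by simp
  show ?thesis unfolding vangle_at_def angle_cos_conj_scale[OF X Y ab \<rho>0] ..
qed

lemma visual_angle_metric_circle_inversion:
  assumes P: "circle_power g > 0" "v \<noteq> 0"
    and x: "x - g = of_real sx * v" and y: "y - g = of_real sy * v"
    and e: "(circle_power g + 2 * (g \<bullet> v) * sx) * (circle_power g + 2 * (g \<bullet> v) * sy) > 0"
  shows "visual_angle_metric (circle_inversion g v x) (circle_inversion g v y) = visual_angle_metric x y"
proof -
  let ?F = "circle_inversion g v"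
  have "visual_angle_metric (?F x) (?F y) = (SUP z\<in>?F ` sphere 0 1. vangle_at (?F x) z (?F y))"
    unfolding visual_angle_metric_def circle_inversion_image_circle[OF P] ..
  also have "\<dots> = (SUP z\<in>sphere 0 1. vangle_at (?F x) (?F z) (?F y))"
    by (simp add: image_image)
  also have "\<dots> = (SUP z\<in>sphere 0 1. vangle_at x z y)"
    by (rule SUP_cong) (use vangle_at_circle_inversion[OF P x y e] in auto)
  finally show ?thesis unfolding visual_angle_metric_def .
qed

lemma visual_angle_metric_commute: "visual_angle_metric x y = visual_angle_metric y x"
proof -
  have "vangle_at x z y = vangle_at y z x" for z
  proof -
    have "Re ((x - z) * cnj (y - z)) = Re ((y - z) * cnj (x - z))" by (simp add: algebra_simps)
    then show ?thesis unfolding vangle_at_def by (simp add: mult.commute)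
  qed
  then show ?thesis unfolding visual_angle_metric_def by simp
qed

text \<open>For \<open>cmod g > 1\<close>, \<open>harmonic_homology g\<close> is the projective involution with centre g whose axis is
  the polar line of g; it maps the unit circle onto itself and lines to lines.\<close>

definition homology_factor :: "complex \<Rightarrow> complex \<Rightarrow> real" where
  "homology_factor g x = ((cmod g)^2 + 1 - 2 * Re (x * cnj g)) / circle_power g"

definition harmonic_homology :: "complex \<Rightarrow> complex \<Rightarrow> complex" where
  "harmonic_homology g x = g + (x - g) / of_real (homology_factor g x)"

lemma homology_factor_affine:
  assumes "circle_power g \<noteq> 0"
  shows "homology_factor g (x + of_real t * (y - x))
    = (1 - t) * homology_factor g x + t * homology_factor g y"
  using assms unfolding homology_factor_def by (simp add: field_simps algebra_simps)

lemma homology_factor_numerator: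
  "(cmod g)^2 + 1 - 2 * Re (x * cnj g) = (cmod (x - g))^2 + 1 - (cmod x)^2"
  unfolding cmod_power2 by (simp add: power2_eq_square algebra_simps)

lemma homology_factor_pos:
  assumes "cmod x \<le> 1" "x \<noteq> g" "circle_power g > 0"
  shows "homology_factor g x > 0"
proof -
  have "(cmod x)^2 \<le> 1" using assms(1) by (simp add: power_le_one)
  moreover have "(cmod (x - g))^2 > 0" using assms(2) by simp
  ultimately have "(cmod g)^2 + 1 - 2 * Re (x * cnj g) > 0"
    unfolding homology_factor_numerator by linarith
  from divide_pos_pos[OF this assms(3)] show ?thesis unfolding homology_factor_def .
qed

lemma harmonic_homology_line_point:
  assumes "circle_power g \<noteq> 0" "homology_factor g x \<noteq> 0" "homology_factor g y \<noteq> 0"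
    "homology_factor g (x + of_real t * (y - x)) \<noteq> 0"
  shows "harmonic_homology g (x + of_real t * (y - x)) = harmonic_homology g x
    + of_real (t * homology_factor g y / homology_factor g (x + of_real t * (y - x)))
      * (harmonic_homology g y - harmonic_homology g x)"
proof -
  define A where "A = x - g"
  define B where "B = y - g"
  define T where "T = complex_of_real t"
  define nx where "nx = complex_of_real (homology_factor g x)"
  define ny where "ny = complex_of_real (homology_factor g y)"
  define W where "W = complex_of_real (homology_factor g (x + of_real t * (y - x)))"
  have n0: "nx \<noteq> 0" "ny \<noteq> 0" "W \<noteq> 0" using assms nx_def ny_def W_def by simp_all
  have W: "W = (1 - T) * nx + T * ny"
    unfolding W_def nx_def ny_def T_def homology_factor_affine[OF assms(1)] by simp
  have "x + of_real t * (y - x) - g = (1 - T) * A + T * B" unfolding A_def B_def T_def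
    by (simp add: algebra_simps)
  then have "harmonic_homology g (x + of_real t * (y - x)) = g + ((1 - T) * A + T * B) / W"
    unfolding harmonic_homology_def W_def by simp
  also have "\<dots> = g + A / nx + (T * ny / W) * (B / ny - A / nx)"
  proof -
    have "A / nx + (T * ny / W) * (B / ny - A / nx) = (A * W + T * B * nx - T * ny * A) / (nx * W)"
      using n0 by (simp add: field_simps)
    also have "A * W + T * B * nx - T * ny * A = nx * ((1 - T) * A + T * B)"
      unfolding W by (simp add: algebra_simps)
    finally show ?thesis using n0 by simp
  qed
  finally show ?thesis unfolding harmonic_homology_def nx_def ny_def W_def A_def B_def T_def by simp
qed

lemma harmonic_homology_chord_endpoint:
  assumes "cmod p = 1" "cmod q = 1" "p \<noteq> q" "g = p + of_real r * (q - p)" "cmod g > 1"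
  shows "harmonic_homology g p = q"
proof -
  have qp: "(cmod (q - p))^2 > 0" using assms(3) by simp
  have rr: "r * (r - 1) > 0" using norm_chord_line_gt_1_iff[OF assms(1-3)] assms(4,5) by simp
  then have r0: "r \<noteq> 0" "r - 1 \<noteq> 0" by auto
  have P: "circle_power g = r * (r - 1) * (cmod (q - p))^2"
    using norm_chord_point_sq[OF assms(1,2)] assms(4) by (simp add: circle_power_def)
  have pg: "p - g = - of_real r * (q - p)" using assms(4) by simp
  have "(cmod g)^2 + 1 - 2 * Re (p * cnj g) = (cmod (p - g))^2"
    using assms(1) unfolding homology_factor_numerator by simp
  also have "\<dots> = r^2 * (cmod (q - p))^2" unfolding pg by (simp add: norm_mult power_mult_distrib)
  finally have "homology_factor g p = r^2 * (cmod (q - p))^2 / (r * (r - 1) * (cmod (q - p))^2)"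
    unfolding homology_factor_def P by simp
  also have "\<dots> = (r * (cmod (q - p))^2) * r / ((r * (cmod (q - p))^2) * (r - 1))"
    by (simp add: power2_eq_square mult_ac)
  also have "\<dots> = r / (r - 1)" by (rule mult_divide_mult_cancel_left) (use qp r0 in simp)
  finally have N: "homology_factor g p = r / (r - 1)" .
  have "harmonic_homology g p = g + (p - g) / of_real (r / (r - 1))"
    unfolding harmonic_homology_def N ..
  also have "\<dots> = q" unfolding pg assms(4) using r0 by (simp add: field_simps)
  finally show ?thesis .
qed

lemma harmonic_homology_swaps_chord:
  assumes "cmod p = 1" "cmod q = 1" "p \<noteq> q" "g \<in> line_through p q" "cmod g > 1"
  shows "harmonic_homology g p = q" "harmonic_homology g q = p"
proof -
  obtain r where r: "g = p + of_real r * (q - p)" using assms(4) mem_line_through_iff by blast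
  then show "harmonic_homology g p = q" using harmonic_homology_chord_endpoint assms by blast
  have "g = q + of_real (1 - r) * (p - q)" using r by (simp add: algebra_simps)
  then show "harmonic_homology g q = p" using harmonic_homology_chord_endpoint assms by blast
qed

lemma harmonic_homology_mem_line:
  assumes "x \<in> line_through g h"
  shows "harmonic_homology g x \<in> line_through g h"
proof -
  obtain s where "x = g + of_real s * (h - g)" using assms mem_line_through_iff by blast
  then have "harmonic_homology g x = g + of_real (s / homology_factor g x) * (h - g)"
    unfolding harmonic_homology_def by simp
  then show ?thesis unfolding mem_line_through_iff by blast
qed

lemma harmonic_homology_eq_circle_inversion:
  assumes "x - g = of_real s * v" "circle_power g + 2 * (g \<bullet> v) * s \<noteq> 0"
    "circle_power g \<noteq> 0" "v \<noteq> 0"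
  shows "harmonic_homology g x = circle_inversion g v x"
proof -
  define E where "E = complex_of_real (circle_power g + 2 * (g \<bullet> v) * s)"
  have E0: "E \<noteq> 0" unfolding E_def using assms(2) of_real_eq_0_iff by blast
  have P0: "complex_of_real (circle_power g) \<noteq> 0" using assms(3) by simp
  have "x = g + of_real s * v" using assms(1) by (simp add: algebra_simps)
  then have "Re (x * cnj g) = (cmod g)^2 + s * (g \<bullet> v)"
    unfolding cmod_power2 inner_complex_def by (simp add: power2_eq_square algebra_simps)
  then have "homology_factor g x = - (circle_power g + 2 * (g \<bullet> v) * s) / circle_power g"
    unfolding homology_factor_def by (simp add: circle_power_def algebra_simps)
  then have N: "complex_of_real (homology_factor g x) = - E / of_real (circle_power g)"
    unfolding E_def by simp
  have "cnj (x - g) = of_real s * cnj v" using arg_cong[OF assms(1), of cnj] by simp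
  moreover have "inversion_denom g v x = cnj v * E"
    unfolding E_def by (rule inversion_denom_on_line[OF assms(1)])
  ultimately show ?thesis
    unfolding harmonic_homology_def circle_inversion_def N assms(1) using E0 P0 assms(4)
    by (simp add: field_simps)
qed

lemma circle_power_add_inner_neg:
  assumes "x = g + of_real s * v" "cmod x < 1"
  shows "circle_power g + 2 * (g \<bullet> v) * s < 0"
proof -
  have "(cmod x)^2 = (cmod g)^2 + 2 * s * (g \<bullet> v) + s^2 * (cmod v)^2"
    using norm_add_real_mult_sq[of g s v] assms(1) by simp
  moreover have "(cmod x)^2 < 1" using assms(2) by (simp add: power_less_one_iff abs_less_iff)
  moreover have "s^2 * (cmod v)^2 \<ge> 0" by simp
  moreover have "2 * s * (g \<bullet> v) = 2 * (g \<bullet> v) * s" by simp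
  ultimately show ?thesis unfolding circle_power_def by linarith
qed

lemma circle_power_pos: "cmod g > 1 \<Longrightarrow> circle_power g > 0"
  unfolding circle_power_def by (simp add: one_less_power)

lemma visual_angle_metric_harmonic_homology:
  assumes "cmod g > 1" "g \<noteq> h" "x \<in> line_through g h" "y \<in> line_through g h"
    "cmod x < 1" "cmod y < 1"
  shows "visual_angle_metric (harmonic_homology g x) (harmonic_homology g y) = visual_angle_metric x y"
proof -
  define v where "v = h - g"
  have v0: "v \<noteq> 0" using assms(2) v_def by simp
  have P: "circle_power g > 0" using circle_power_pos assms(1) .
  obtain sx where sx: "x = g + of_real sx * v" using assms(3) mem_line_through_iff v_def by blast
  obtain sy where sy: "y = g + of_real sy * v" using assms(4) mem_line_through_iff v_def by blast
  have ex: "circle_power g + 2 * (g \<bullet> v) * sx < 0" by (rule circle_power_add_inner_neg[OF sx assms(5)])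
  have ey: "circle_power g + 2 * (g \<bullet> v) * sy < 0" by (rule circle_power_add_inner_neg[OF sy assms(6)])
  have "harmonic_homology g x = circle_inversion g v x" "harmonic_homology g y = circle_inversion g v y"
    using harmonic_homology_eq_circle_inversion[of _ g _ v] sx sy ex ey P v0 by auto
  moreover have "visual_angle_metric (circle_inversion g v x) (circle_inversion g v y)
      = visual_angle_metric x y"
    by (rule visual_angle_metric_circle_inversion[OF P v0 _ _ mult_neg_neg[OF ex ey]])
      (use sx sy in simp_all)
  ultimately show ?thesis by simp
qed

lemma LIS_crossing_in_disk:
  assumes "g \<noteq> h" "cmod p = 1" "cmod q = 1" "line_side g h p * line_side g h q < 0"
  shows "cmod (LIS g h p q) < 1"
proof -
  have "p \<noteq> q" using assms(4) by (auto simp: mult_less_0_iff)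
  moreover obtain \<rho> where "0 < \<rho>" "\<rho> < 1" "LIS g h p q = p + of_real \<rho> * (q - p)"
    using LIS_crossing[OF assms(1,4)] by blast
  ultimately show ?thesis using norm_chord_line_lt_1_iff[OF assms(2,3)] by simp
qed

lemma harmonic_homology_LIS:
  assumes "cmod g > 1" "g \<noteq> h" "cmod p = 1" "cmod q = 1"
    and sides: "line_side g h p * line_side g h q < 0" "line_side g h p' * line_side g h q' < 0"
    and "harmonic_homology g p = p'" "harmonic_homology g q = q'"
  shows "harmonic_homology g (LIS g h p q) = LIS g h p' q'"
proof -
  obtain \<rho> where \<rho>: "LIS g h p q = p + of_real \<rho> * (q - p)" and on_gh: "LIS g h p q \<in> line_through g h"
    using LIS_crossing[OF assms(2) sides(1)] by blast
  have P: "circle_power g \<noteq> 0" using circle_power_pos[OF assms(1)] by simp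
  have factor_nonzero: "homology_factor g x \<noteq> 0" if "cmod x \<le> 1" for x
  proof -
    have "x \<noteq> g" using that assms(1) by auto
    then show ?thesis using homology_factor_pos[OF that _ circle_power_pos[OF assms(1)]] by simp
  qed
  have "cmod (LIS g h p q) \<le> 1" using LIS_crossing_in_disk[OF assms(2-4) sides(1)] by simp
  then have "harmonic_homology g (LIS g h p q) = harmonic_homology g p
      + of_real (\<rho> * homology_factor g q / homology_factor g (LIS g h p q))
        * (harmonic_homology g q - harmonic_homology g p)"
    unfolding \<rho> using assms(3,4) by (intro harmonic_homology_line_point P factor_nonzero) simp_all
  then have "harmonic_homology g (LIS g h p q) \<in> line_through p' q'"
    unfolding assms(7,8) mem_line_through_iff by blast
  moreover have "harmonic_homology g (LIS g h p q) \<in> line_through g h"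
    using harmonic_homology_mem_line[OF on_gh] .
  ultimately show ?thesis using LIS_crossing[OF assms(2) sides(2)] by blast
qed

lemma visual_angle_metric_LIS_harmonic_homology:
  assumes "cmod g > 1" "g \<noteq> h" "cmod p = 1" "cmod q = 1" "cmod r = 1" "cmod s = 1"
    and sides: "line_side g h p * line_side g h q < 0" "line_side g h r * line_side g h s < 0"
      "line_side g h p' * line_side g h q' < 0" "line_side g h r' * line_side g h s' < 0"
    and "harmonic_homology g p = p'" "harmonic_homology g q = q'"
      "harmonic_homology g r = r'" "harmonic_homology g s = s'"
  shows "visual_angle_metric (LIS g h p q) (LIS g h r s)
    = visual_angle_metric (LIS g h p' q') (LIS g h r' s')"
proof -
  have "LIS g h p q \<in> line_through g h" "LIS g h r s \<in> line_through g h"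
    using LIS_crossing[OF assms(2) sides(1)] LIS_crossing[OF assms(2) sides(2)] by blast+
  moreover have "cmod (LIS g h p q) < 1" "cmod (LIS g h r s) < 1"
    using LIS_crossing_in_disk assms(2-6) sides(1,2) by blast+
  ultimately have "visual_angle_metric (LIS g h p q) (LIS g h r s)
      = visual_angle_metric (harmonic_homology g (LIS g h p q)) (harmonic_homology g (LIS g h r s))"
    using visual_angle_metric_harmonic_homology[OF assms(1,2)] by simp
  also have "\<dots> = visual_angle_metric (LIS g h p' q') (LIS g h r' s')"
    using harmonic_homology_LIS[OF assms(1-4) sides(1,3) assms(11,12)]
      harmonic_homology_LIS[OF assms(1,2,5,6) sides(2,4) assms(13,14)] by simp
  finally show ?thesis .
qed

lemma line_side_chord_line:
  assumes "g = p + of_real r * (q - p)"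
  shows "line_side g h p = - r * Im (cnj (h - g) * (q - p))"
    "line_side g h q = (1 - r) * Im (cnj (h - g) * (q - p))"
proof -
  have pg: "p - g = of_real (- r) * (q - p)" and qg: "q - g = of_real (1 - r) * (q - p)"
    using assms by (simp_all add: algebra_simps)
  show "line_side g h p = - r * Im (cnj (h - g) * (q - p))"
    "line_side g h q = (1 - r) * Im (cnj (h - g) * (q - p))"
    unfolding line_side_def pg qg by (simp_all add: algebra_simps)
qed

lemma chord_line_contains_collinear:
  assumes "Re (a * cnj m) = C" "Re (b * cnj m) = C" "Re (g * cnj m) = C" "a \<noteq> b" "g \<noteq> h"
    and "line_side g h a = 0" "line_side g h b = 0" "line_side g h c = 0"
  shows "Re (c * cnj m) = C"
proof -
  have on_line: "Re (x * cnj m) = C + s * Re ((h - g) * cnj m)" if x: "x = g + of_real s * (h - g)"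
    for x s
  proof -
    have "Re (x * cnj m) = Re (g * cnj m) + s * Re ((h - g) * cnj m)"
      unfolding x by (simp add: algebra_simps)
    then show ?thesis unfolding assms(3) .
  qed
  obtain sa where sa: "a = g + of_real sa * (h - g)"
    using assms(6) line_side_eq_0_iff[OF assms(5)] mem_line_through_iff by blast
  obtain sb where sb: "b = g + of_real sb * (h - g)"
    using assms(7) line_side_eq_0_iff[OF assms(5)] mem_line_through_iff by blast
  obtain sc where sc: "c = g + of_real sc * (h - g)"
    using assms(8) line_side_eq_0_iff[OF assms(5)] mem_line_through_iff by blast
  have "sa \<noteq> sb" using assms(4) sa sb by auto
  moreover have "sa * Re ((h - g) * cnj m) = 0" "sb * Re ((h - g) * cnj m) = 0"
    using on_line[OF sa] on_line[OF sb] assms(1,2) by simp_all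
  ultimately have "Re ((h - g) * cnj m) = 0" by auto
  then show ?thesis using on_line[OF sc] by simp
qed

lemma line_side_open_segment:
  assumes "h \<in> open_segment b c"
  shows "line_side g h b * line_side g h c < 0 \<or> line_side g h b = 0 \<and> line_side g h c = 0"
proof -
  obtain \<theta> where \<theta>: "0 < \<theta>" "\<theta> < 1" "h = b + of_real \<theta> * (c - b)"
    using assms unfolding in_segment by (auto simp: scaleR_conv_of_real algebra_simps)
  have "line_side g h h = 0" unfolding line_side_def by (simp add: algebra_simps)
  then have \<sigma>h: "(1 - \<theta>) * line_side g h b + \<theta> * line_side g h c = 0"
    using line_side_affine[of g h b \<theta> c, folded \<theta>(3)] by simp
  have prod: "\<theta> * (line_side g h b * line_side g h c) = - ((1 - \<theta>) * (line_side g h b)^2)"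
    using arg_cong[OF \<sigma>h, of "\<lambda>x. line_side g h b * x"] by (simp add: algebra_simps power2_eq_square)
  show ?thesis
  proof (cases "line_side g h b = 0")
    case True
    then show ?thesis using \<sigma>h \<theta>(1) by simp
  next
    case False
    then have "(1 - \<theta>) * (line_side g h b)^2 > 0" using \<theta>(2) by simp
    then have "\<theta> * (line_side g h b * line_side g h c) < 0" using prod by simp
    then show ?thesis using \<theta>(1) by (simp add: mult_less_0_iff)
  qed
qed

text \<open>The line through g and h separates b from c at h; as g lies outside the disk on both chord lines,
  a is on the same side as b and d on the same side as c.\<close>

lemma chord_configuration_line_sides:
  assumes "cmod a = 1" "cmod b = 1" "cmod c = 1" "cmod d = 1" "a \<noteq> b" "c \<noteq> d"
    and "Re (a * cnj m) = C" "Re (b * cnj m) = C" "Re (c * cnj m) < C"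
    and "g \<in> line_through a b" "g \<in> line_through c d" "cmod g > 1" "h \<in> open_segment b c"
  shows "line_side g h b * line_side g h c < 0" "line_side g h a * line_side g h c < 0"
    "line_side g h b * line_side g h d < 0" "line_side g h a * line_side g h d < 0"
proof -
  obtain r1 where r1: "g = a + of_real r1 * (b - a)" using assms(10) mem_line_through_iff by blast
  obtain r2 where r2: "g = c + of_real r2 * (d - c)" using assms(11) mem_line_through_iff by blast
  obtain \<theta> where "0 < \<theta>" "\<theta> < 1" "h = b + of_real \<theta> * (c - b)" and "b \<noteq> c"
    using assms(13) unfolding in_segment by (auto simp: scaleR_conv_of_real algebra_simps)
  then have "cmod h < 1" using norm_chord_line_lt_1_iff[OF assms(2,3)] by simp
  then have gh: "g \<noteq> h" using assms(12) by auto
  define \<sigma> where "\<sigma> = line_side g h"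
  define I1 where "I1 = Im (cnj (h - g) * (b - a))"
  define I2 where "I2 = Im (cnj (h - g) * (d - c))"
  have \<sigma>ab: "\<sigma> a = - r1 * I1" "\<sigma> b = (1 - r1) * I1"
    using line_side_chord_line[OF r1] \<sigma>_def I1_def by simp_all
  have \<sigma>cd: "\<sigma> c = - r2 * I2" "\<sigma> d = (1 - r2) * I2"
    using line_side_chord_line[OF r2] \<sigma>_def I2_def by simp_all
  have rr1: "r1 * (r1 - 1) > 0" using norm_chord_line_gt_1_iff[OF assms(1,2,5)] r1 assms(12) by simp
  have rr2: "r2 * (r2 - 1) > 0" using norm_chord_line_gt_1_iff[OF assms(3,4,6)] r2 assms(12) by simp
  have bc: "\<sigma> b * \<sigma> c < 0"
  proof (rule ccontr)
    assume "\<not> \<sigma> b * \<sigma> c < 0"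
    then have \<sigma>bc: "\<sigma> b = 0" "\<sigma> c = 0" using line_side_open_segment[OF assms(13)] \<sigma>_def by auto
    then have "\<sigma> a = 0" using \<sigma>ab rr1 by auto
    have "Re (g * cnj m) = (1 - r1) * Re (a * cnj m) + r1 * Re (b * cnj m)"
      unfolding r1 by (simp add: algebra_simps)
    then have "Re (g * cnj m) = C" unfolding assms(7,8) by (simp add: algebra_simps)
    then have "Re (c * cnj m) = C"
      using chord_line_contains_collinear[OF assms(7,8) _ assms(5) gh] \<open>\<sigma> a = 0\<close> \<sigma>bc \<sigma>_def by simp
    then show False using assms(9) by simp
  qed
  have "\<sigma> a * \<sigma> b = r1 * (r1 - 1) * I1^2" unfolding \<sigma>ab by (simp add: power2_eq_square algebra_simps)
  moreover have "I1 \<noteq> 0" using bc \<sigma>ab(2) by auto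
  ultimately have ab: "\<sigma> a * \<sigma> b > 0" using rr1 by simp
  have "\<sigma> c * \<sigma> d = r2 * (r2 - 1) * I2^2" unfolding \<sigma>cd by (simp add: power2_eq_square algebra_simps)
  moreover have "I2 \<noteq> 0" using bc \<sigma>cd(1) by auto
  ultimately have cd: "\<sigma> c * \<sigma> d > 0" using rr2 by simp
  show "\<sigma> b * \<sigma> c < 0" "\<sigma> a * \<sigma> c < 0" "\<sigma> b * \<sigma> d < 0" "\<sigma> a * \<sigma> d < 0"
    using ab bc cd by (auto simp: zero_less_mult_iff mult_less_0_iff)
qed

theorem mainTheorem4:
  fixes a b c d h :: complex
  assumes "in_circle_order a b c d"
    and "\<not> lines_parallel a b c d"
    and "h \<in> open_segment b c"
  shows "let g = LIS a b c d; j = LIS g h a c; k = LIS g h b d; l = LIS g h a d in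
           visual_angle_metric h j = visual_angle_metric k l \<and>
           visual_angle_metric h k = visual_angle_metric j l"
proof -
  obtain m C where a: "cmod a = 1" and b: "cmod b = 1" and c: "cmod c = 1" and d: "cmod d = 1"
    and ab: "a \<noteq> b" and cd: "c \<noteq> d"
    and chord: "Re (a * cnj m) = C" "Re (b * cnj m) = C" "Re (c * cnj m) < C" "Re (d * cnj m) < C"
    using in_circle_order_chord_line[OF assms(1)] by blast
  define g where "g = LIS a b c d"
  have g_ab: "g \<in> line_through a b" and g_cd: "g \<in> line_through c d"
    using LIS_mem_lines[OF ab cd assms(2)] g_def by simp_all
  have g: "cmod g > 1" by (rule chord_lines_meet_outside_disk[OF c d cd chord(3,4,1,2) g_ab g_cd])
  note sides = chord_configuration_line_sides[OF a b c d ab cd chord(1-3) g_ab g_cd g assms(3)]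
  have gh: "g \<noteq> h" using sides(1) by (auto simp: line_side_def)
  have "h \<in> line_through b c" using assms(3) unfolding in_segment mem_line_through_iff
    by (auto simp: scaleR_conv_of_real algebra_simps)
  moreover have "h \<in> line_through g h" unfolding mem_line_through_iff by (rule exI[of _ 1]) simp
  ultimately have h: "LIS g h b c = h" using LIS_crossing[OF gh sides(1)] by metis
  note ab_swap = harmonic_homology_swaps_chord[OF a b ab g_ab g]
    and cd_swap = harmonic_homology_swaps_chord[OF c d cd g_cd g]
  note vam = visual_angle_metric_LIS_harmonic_homology[OF g gh]
  have "visual_angle_metric h (LIS g h a c) = visual_angle_metric (LIS g h a d) (LIS g h b d)"
    using vam[OF b c a c sides(1,2,4,3) ab_swap(2) cd_swap(1) ab_swap(1) cd_swap(1)] h by simp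
  moreover have "visual_angle_metric h (LIS g h b d) = visual_angle_metric (LIS g h a d) (LIS g h a c)"
    using vam[OF b c b d sides(1,3,4,2) ab_swap(2) cd_swap(1) ab_swap(2) cd_swap(2)] h by simp
  ultimately show ?thesis unfolding Let_def g_def[symmetric] using visual_angle_metric_commute by metis
qed

end
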